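(* Suppose that $E_1,\dotsc,E_\ell\in\mathcal{P}$ have pairwise disjoint interiors and that any intersection $E_r\cap E_s$ with affine dimension $d-1$ is a common face of $E_r$ and $E_s$. If $P:=\bigcup_{s=1}^\ell E_s\in\mathcal{P}$, then $E_1,\dotsc,E_\ell$ constitutes a polyhedral subdivision of $P$.
   Context: $\mathcal{P}$ is the collection of polyhedral subsets of $\mathbb{R}^d$ (finite intersections of closed half-spaces, with $\mathbb{R}^d$ included) with non-empty interior. A face $F$ of a convex set $E$ is a convex subset such that whenever $u,v\in E$ and $tu+(1-t)v\in F$ for some $t\in(0,1)$, we have $u,v\in F$. A polyhedral subdivision of $P\in\mathcal{P}$ is a finite collection $E_1,\dots,E_\ell\in\mathcal{P}$ with $P=\bigcup_jE_j$ such that $E_i\cap E_j$ is a common face of $E_i$ and $E_j$ for all $i,j$. *)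

theory Defs
  imports "HOL-Analysis.Analysis"
begin

text \<open>The class \<open>\<P>\<close>: polyhedral subsets (finite intersections of closed half-spaces,
  the whole space included) with non-empty interior.\<close>
definition polyhedral_set :: "'a::euclidean_space set \<Rightarrow> bool" where
  "polyhedral_set E \<longleftrightarrow> polyhedron E \<and> interior E \<noteq> {}"

definition polyhedral_subdivision :: "'a::euclidean_space set \<Rightarrow> nat \<Rightarrow> (nat \<Rightarrow> 'a set) \<Rightarrow> bool" where
  "polyhedral_subdivision P l E \<longleftrightarrow>
     polyhedral_set P \<and>
     (\<forall>i<l. polyhedral_set (E i)) \<and>
     P = (\<Union>i<l. E i) \<and>
     (\<forall>i<l. \<forall>j<l. (E i \<inter> E j) face_of (E i) \<and> (E i \<inter> E j) face_of (E j))"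

end

theory Submission
  imports Defs
begin

text \<open>Only closedness, convexity and non-empty interiors of the cells and convexity of their
  union matter. Let \<open>w \<in> E\<^sub>i \<inter> E\<^sub>j\<close> lie in the open segment between \<open>a, b \<in> E\<^sub>i\<close>, and call a
  cell good if it contains both \<open>a\<close> and \<open>b\<close>. Near \<open>w\<close> only cells through \<open>w\<close> are present.
  Join a generic interior point \<open>p\<close> of \<open>E\<^sub>i\<close> to a generic interior point \<open>q\<close> of \<open>E\<^sub>j\<close>, both
  close to \<open>w\<close>: by convexity of the union the segment \<open>[p, q]\<close> stays inside the cells, and by
  genericity it misses every pairwise intersection of dimension \<open>\<le> d - 2\<close>. If \<open>E\<^sub>j\<close> were bad,
  then \<open>[p, q]\<close>, being connected, would pass from a good cell \<open>E\<^sub>k\<close> to a bad cell \<open>E\<^sub>m\<close>; as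
  interiors are disjoint, \<open>E\<^sub>k \<inter> E\<^sub>m\<close> has dimension exactly \<open>d - 1\<close>, so it is a face of \<open>E\<^sub>k\<close>
  through \<open>w\<close> and therefore contains \<open>a\<close> and \<open>b\<close>, contradicting badness of \<open>E\<^sub>m\<close>.\<close>

lemma negligible_affine_hull_low_dim:
  fixes S :: "'a::euclidean_space set"
  assumes "aff_dim S < DIM('a)"
  shows "negligible (affine hull S)"
proof -
  have "interior (affine hull S) = {}"
    using assms by (intro low_dim_interior) simp
  then show ?thesis
    using negligible_convex_interior[of "affine hull S"] by simp
qed

lemma aff_dim_less_DIM_if_empty_interior:
  fixes S :: "'a::euclidean_space set"
  assumes "convex S" "interior S = {}"
  shows "aff_dim S < DIM('a)"
  using assms aff_dim_le_DIM[of S] interior_rel_interior_gen[of S] rel_interior_eq_empty[of S]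
  by (cases "S = {}") auto

lemma convex_interior_Int_ball_nonempty:
  fixes S :: "'a::euclidean_space set"
  assumes "convex S" "interior S \<noteq> {}" "w \<in> S" "r > 0"
  shows "interior S \<inter> ball w r \<noteq> {}"
proof -
  have "w \<in> ball w r \<inter> closure (interior S)"
    using assms convex_closure_interior closure_subset by auto
  then show ?thesis
    using open_Int_closure_eq_empty[of "ball w r" "interior S"] by blast
qed

lemma ball_meets_only_closed_sets_through_centre:
  assumes "finite I" "\<And>k. k \<in> I \<Longrightarrow> closed (F k)"
  obtains r where "r > 0" "\<And>k x. k \<in> I \<Longrightarrow> x \<in> ball w r \<Longrightarrow> x \<in> F k \<Longrightarrow> w \<in> F k"
proof -
  define U where "U = - (\<Union>k\<in>{k\<in>I. w \<notin> F k}. F k)"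
  have "open U"
    using assms unfolding U_def by (intro open_Compl closed_UN) auto
  moreover have "w \<in> U"
    unfolding U_def by blast
  ultimately obtain r where "r > 0" "ball w r \<subseteq> U"
    using open_contains_ball by blast
  then show ?thesis
    using that unfolding U_def by blast
qed

lemma closed_segment_avoiding_low_dim:
  fixes S :: "'i \<Rightarrow> 'a::euclidean_space set"
  assumes "finite I" and low: "\<And>k. k \<in> I \<Longrightarrow> aff_dim (S k) < int DIM('a) - 1"
    and "open U" "U \<noteq> {}" "open V" "V \<noteq> {}"
  obtains p q where "p \<in> U" "q \<in> V" "\<And>k. k \<in> I \<Longrightarrow> closed_segment p q \<inter> S k = {}"
proof -
  have "aff_dim (S k) < DIM('a)" if "k \<in> I" for k
    using low[OF that] by linarith
  then have "negligible (\<Union>k\<in>I. affine hull S k)"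
    using assms(1) by (intro negligible_Union) (auto intro!: negligible_affine_hull_low_dim)
  then obtain p where p: "p \<in> U" "p \<notin> (\<Union>k\<in>I. affine hull S k)"
    using assms open_not_negligible negligible_subset by (metis subsetI)
  have "aff_dim (insert p (S k)) < DIM('a)" if "k \<in> I" for k
    using low[OF that] by (simp add: aff_dim_insert)
  then have "negligible (\<Union>k\<in>I. affine hull (insert p (S k)))"
    using assms by (intro negligible_Union) (auto intro!: negligible_affine_hull_low_dim)
  then obtain q where q: "q \<in> V" "q \<notin> (\<Union>k\<in>I. affine hull (insert p (S k)))"
    using assms open_not_negligible negligible_subset by (metis subsetI)
  have "closed_segment p q \<inter> S k = {}" if "k \<in> I" for k
  proof (rule ccontr)
    assume "closed_segment p q \<inter> S k \<noteq> {}"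
    then obtain z where z: "z \<in> closed_segment p q" "z \<in> S k"
      by blast
    have "z \<noteq> p"
      using p z that by (auto intro: hull_inc)
    moreover have "collinear {p, z, q}"
      using z collinear_subset[OF collinear_closed_segment[of p q]] by auto
    ultimately have "q \<in> affine hull {p, z}"
      by (intro collinear_3_imp_in_affine_hull) auto
    also have "\<dots> \<subseteq> affine hull (insert p (S k))"
      using z by (intro hull_mono) auto
    finally show False
      using q that by blast
  qed
  then show ?thesis
    using that p q by blast
qed

lemma connected_closed_cover_crossing:
  assumes "connected C" "finite I" "\<And>k. k \<in> I \<Longrightarrow> closed (F k)" "C \<subseteq> (\<Union>k\<in>I. F k)"
    and "a \<in> I" "Q a" "x \<in> C" "x \<in> F a"
    and "b \<in> I" "\<not> Q b" "y \<in> C" "y \<in> F b"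
  obtains z k m where "z \<in> C" "k \<in> I" "m \<in> I" "Q k" "\<not> Q m" "z \<in> F k" "z \<in> F m"
proof -
  define A where "A = (\<Union>k\<in>{k\<in>I. Q k}. F k)"
  define B where "B = (\<Union>k\<in>{k\<in>I. \<not> Q k}. F k)"
  have "closed A" "closed B"
    using assms(2,3) unfolding A_def B_def by (simp_all add: closed_UN)
  then have "closedin (top_of_set C) (C \<inter> A)" "closedin (top_of_set C) (C \<inter> B)"
    by (simp_all add: closedin_closed_Int)
  moreover have "C \<subseteq> (C \<inter> A) \<union> (C \<inter> B)"
    using assms(4) unfolding A_def B_def by blast
  moreover have "C \<inter> A \<noteq> {}" "C \<inter> B \<noteq> {}"
    using assms(5-12) unfolding A_def B_def by blast+
  ultimately have "(C \<inter> A) \<inter> (C \<inter> B) \<noteq> {}"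
    using assms(1) unfolding connected_closedin by blast
  then show ?thesis
    using that unfolding A_def B_def by blast
qed

lemma cells_through_point_linked_by_facet:
  fixes E :: "'i \<Rightarrow> 'a::euclidean_space set"
  assumes "finite I"
    and cell: "\<And>k. k \<in> I \<Longrightarrow> closed (E k) \<and> convex (E k) \<and> interior (E k) \<noteq> {}"
    and disj: "\<And>k m. k \<in> I \<Longrightarrow> m \<in> I \<Longrightarrow> k \<noteq> m \<Longrightarrow> interior (E k) \<inter> interior (E m) = {}"
    and union: "convex (\<Union>k\<in>I. E k)"
    and ij: "i \<in> I" "j \<in> I" and w: "w \<in> E i" "w \<in> E j" and Q: "Q i" "\<not> Q j"
  obtains k m where "k \<in> I" "m \<in> I" "w \<in> E k" "w \<in> E m" "Q k" "\<not> Q m"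
    "aff_dim (E k \<inter> E m) = int DIM('a) - 1"
proof -
  obtain r where r: "r > 0" and near: "\<And>k x. k \<in> I \<Longrightarrow> x \<in> ball w r \<Longrightarrow> x \<in> E k \<Longrightarrow> w \<in> E k"
    using ball_meets_only_closed_sets_through_centre[of I E w] assms(1) cell by blast
  define Low where "Low = {(k, m) \<in> I \<times> I. aff_dim (E k \<inter> E m) < int DIM('a) - 1}"
  have fin: "finite Low"
    using assms(1) unfolding Low_def by (auto intro: finite_subset[of _ "I \<times> I"])
  have low: "aff_dim ((\<lambda>(k, m). E k \<inter> E m) km) < int DIM('a) - 1" if "km \<in> Low" for km
    using that unfolding Low_def by auto
  have near_i: "interior (E i) \<inter> ball w r \<noteq> {}"
    using convex_interior_Int_ball_nonempty[of "E i" w r] cell[OF ij(1)] w(1) r by blast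
  have near_j: "interior (E j) \<inter> ball w r \<noteq> {}"
    using convex_interior_Int_ball_nonempty[of "E j" w r] cell[OF ij(2)] w(2) r by blast
  obtain p q where p: "p \<in> interior (E i) \<inter> ball w r" and q: "q \<in> interior (E j) \<inter> ball w r"
    and avoid: "\<And>km. km \<in> Low \<Longrightarrow> closed_segment p q \<inter> (\<lambda>(k, m). E k \<inter> E m) km = {}"
    using closed_segment_avoiding_low_dim[of Low "\<lambda>(k, m). E k \<inter> E m", OF fin low
        open_Int[OF open_interior open_ball] near_i open_Int[OF open_interior open_ball] near_j]
    by blast
  have "p \<in> E i" "q \<in> E j"
    using p q interior_subset by blast+
  then have segment: "closed_segment p q \<subseteq> (\<Union>k\<in>I. E k) \<inter> ball w r"
    using p q ij by (intro closed_segment_subset convex_Int union convex_ball) auto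
  define K where "K = {k\<in>I. w \<in> E k}"
  have cover: "closed_segment p q \<subseteq> (\<Union>k\<in>K. E k)"
    using near segment unfolding K_def by blast
  have K: "finite K" "\<And>k. k \<in> K \<Longrightarrow> closed (E k)" "i \<in> K" "j \<in> K"
    using assms(1) cell ij w unfolding K_def by auto
  obtain z k m where z_seg: "z \<in> closed_segment p q" and km: "k \<in> K" "m \<in> K" "Q k" "\<not> Q m"
    and z: "z \<in> E k" "z \<in> E m"
    by (rule connected_closed_cover_crossing[OF connected_segment K(1,2) cover K(3) Q(1)
        ends_in_segment(1) \<open>p \<in> E i\<close> K(4) Q(2) ends_in_segment(2) \<open>q \<in> E j\<close>])
  have km_I: "k \<in> I" "m \<in> I" "w \<in> E k" "w \<in> E m" "k \<noteq> m"
    using km unfolding K_def by auto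
  then have "interior (E k \<inter> E m) = {}"
    using disj by simp
  then have "aff_dim (E k \<inter> E m) < DIM('a)"
    using cell km_I by (intro aff_dim_less_DIM_if_empty_interior convex_Int) auto
  moreover have "(k, m) \<notin> Low"
    using avoid[of "(k, m)"] z_seg z by blast
  ultimately have "aff_dim (E k \<inter> E m) = int DIM('a) - 1"
    using km_I unfolding Low_def by auto
  then show ?thesis
    by (rule that[OF km_I(1-4) km(3,4)])
qed

lemma Int_face_of_if_facets_face_of:
  fixes E :: "'i \<Rightarrow> 'a::euclidean_space set"
  assumes "finite I"
    and cell: "\<And>k. k \<in> I \<Longrightarrow> closed (E k) \<and> convex (E k) \<and> interior (E k) \<noteq> {}"
    and disj: "\<And>k m. k \<in> I \<Longrightarrow> m \<in> I \<Longrightarrow> k \<noteq> m \<Longrightarrow> interior (E k) \<inter> interior (E m) = {}"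
    and facet: "\<And>k m. k \<in> I \<Longrightarrow> m \<in> I \<Longrightarrow> aff_dim (E k \<inter> E m) = int DIM('a) - 1 \<Longrightarrow>
                  (E k \<inter> E m) face_of E k"
    and union: "convex (\<Union>k\<in>I. E k)"
    and ij: "i \<in> I" "j \<in> I"
  shows "(E i \<inter> E j) face_of E i"
proof -
  have "a \<in> E j \<and> b \<in> E j"
    if ab: "a \<in> E i" "b \<in> E i" and w: "w \<in> E i \<inter> E j" "w \<in> open_segment a b" for a b w
  proof (rule ccontr)
    assume not_j: "\<not> (a \<in> E j \<and> b \<in> E j)"
    obtain k m where km: "k \<in> I" "m \<in> I" "w \<in> E k" "w \<in> E m"
      "a \<in> E k \<and> b \<in> E k" "\<not> (a \<in> E m \<and> b \<in> E m)" "aff_dim (E k \<inter> E m) = int DIM('a) - 1"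
      by (rule cells_through_point_linked_by_facet[where Q = "\<lambda>k. a \<in> E k \<and> b \<in> E k",
          OF assms(1) cell disj union ij IntD1[OF w(1)] IntD2[OF w(1)] conjI[OF ab] not_j])
    have "(E k \<inter> E m) face_of E k"
      using facet km(1,2,7) .
    then have "a \<in> E k \<inter> E m \<and> b \<in> E k \<inter> E m"
      using km(3-5) by (intro face_ofD[OF _ w(2)]) auto
    then show False
      using km(6) by blast
  qed
  moreover have "convex (E i \<inter> E j)"
    using cell ij by (simp add: convex_Int)
  ultimately show ?thesis
    unfolding face_of_def by blast
qed

theorem lemmaS19:
  fixes E :: "nat \<Rightarrow> 'a::euclidean_space set" and l :: nat
  assumes "\<forall>i<l. polyhedral_set (E i)"
    and "\<forall>i<l. \<forall>j<l. i \<noteq> j \<longrightarrow> interior (E i) \<inter> interior (E j) = {}"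
    and "\<forall>r<l. \<forall>s<l. aff_dim (E r \<inter> E s) = int DIM('a) - 1 \<longrightarrow>
            (E r \<inter> E s) face_of (E r) \<and> (E r \<inter> E s) face_of (E s)"
    and "polyhedral_set (\<Union>s<l. E s)"
  shows "polyhedral_subdivision (\<Union>s<l. E s) l E"
proof -
  have cell: "closed (E k) \<and> convex (E k) \<and> interior (E k) \<noteq> {}" if "k \<in> {..<l}" for k
    using assms(1) that polyhedron_imp_closed polyhedron_imp_convex
    by (auto simp: polyhedral_set_def)
  have union: "convex (\<Union>s<l. E s)"
    using assms(4) polyhedron_imp_convex by (auto simp: polyhedral_set_def)
  have disj: "\<And>k m. k \<in> {..<l} \<Longrightarrow> m \<in> {..<l} \<Longrightarrow> k \<noteq> m \<Longrightarrow> interior (E k) \<inter> interior (E m) = {}"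
    and facet: "\<And>k m. k \<in> {..<l} \<Longrightarrow> m \<in> {..<l} \<Longrightarrow> aff_dim (E k \<inter> E m) = int DIM('a) - 1 \<Longrightarrow>
                  (E k \<inter> E m) face_of E k"
    using assms(2,3) by blast+
  have face: "(E i \<inter> E j) face_of E i" if "i < l" "j < l" for i j
    using Int_face_of_if_facets_face_of[OF finite_lessThan cell disj facet union] that by blast
  have "(E i \<inter> E j) face_of E j" if "i < l" "j < l" for i j
    using face[OF that(2,1)] by (simp add: Int_commute)
  then show ?thesis
    unfolding polyhedral_subdivision_def using assms(1,4) face by blast
qed

end
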